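(* Let $P$ be the random walk on a connected weighted graph on finite vertex set $X$, let $M\subseteq X$ be nonempty, let $S\subseteq X\setminus M$ be nonempty, and let $p\in\mathbb R$ and $T\in\mathbb N$ satisfy $\frac{2}{T}\le\pi(S)\,p\le\frac{1}{C_{S,M}}$. Then, for the walk started from $Y_0\sim\pi|_S$, \[ \Pr_{\pi|_S}\big(\tau_M<\tau_S^+\ \text{and}\ \tau_S^+<T\big)\ge p/2, \] i.e., with probability at least $p/2$ the walk first hits $M$ and then returns to $S$ within the first $T$ steps.
   Context: Weighted graph $w_{u,v}=w_{v,u}\ge0$, $w_u=\sum_vw_{u,v}$, $W=\sum_{u,v}w_{u,v}$ (ordered pairs), $P_{u,v}=w_{u,v}/w_u$, $\pi_u=w_u/W$, $\pi(S)=\sum_{u\in S}\pi_u$, $(\pi|_S)_u=\pi_u/\pi(S)$ for $u\in S$. $\tau_M=\min\{i\ge0:Y_i\in M\}$, $\tau_S^+=\min\{i>0:Y_i\in S\}$. A unit flow from a distribution $\sigma$ supported on $X\setminus M$ to $M$ is $p:X\times X\to\mathbb R$ with $p_{u,v}=0$ if $w_{u,v}=0$, $p_{u,v}=-p_{v,u}$, $\sum_vp_{u,v}=\sigma_u$ for $u\notin M$, $\sum_{u\in M}\sum_{v\notin M}p_{u,v}=-1$. $R_{\sigma,M}=\min_p\sum_{\{u,v\}}p_{u,v}^2/w_{u,v}$, $R_{S,M}=\min_{\sigma:\mathrm{supp}(\sigma)\subseteq S}R_{\sigma,M}$, $C_{S,M}=WR_{S,M}$. *)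

theory Defs
  imports Complex_Main
begin

definition wdeg :: "'a set \<Rightarrow> ('a \<Rightarrow> 'a \<Rightarrow> real) \<Rightarrow> 'a \<Rightarrow> real" where
  "wdeg X w u = (\<Sum>v\<in>X. w u v)"

definition wtotal :: "'a set \<Rightarrow> ('a \<Rightarrow> 'a \<Rightarrow> real) \<Rightarrow> real" where
  "wtotal X w = (\<Sum>u\<in>X. \<Sum>v\<in>X. w u v)"

definition trans_prob :: "'a set \<Rightarrow> ('a \<Rightarrow> 'a \<Rightarrow> real) \<Rightarrow> 'a \<Rightarrow> 'a \<Rightarrow> real" where
  "trans_prob X w u v = w u v / wdeg X w u"

definition stat_dist :: "'a set \<Rightarrow> ('a \<Rightarrow> 'a \<Rightarrow> real) \<Rightarrow> 'a \<Rightarrow> real" where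
  "stat_dist X w u = wdeg X w u / wtotal X w"

definition stat_meas :: "'a set \<Rightarrow> ('a \<Rightarrow> 'a \<Rightarrow> real) \<Rightarrow> 'a set \<Rightarrow> real" where
  "stat_meas X w S = (\<Sum>u\<in>S. stat_dist X w u)"

definition stat_restr :: "'a set \<Rightarrow> ('a \<Rightarrow> 'a \<Rightarrow> real) \<Rightarrow> 'a set \<Rightarrow> 'a \<Rightarrow> real" where
  "stat_restr X w S u = (if u \<in> S then stat_dist X w u / stat_meas X w S else 0)"

definition weighted_graph :: "'a set \<Rightarrow> ('a \<Rightarrow> 'a \<Rightarrow> real) \<Rightarrow> bool" where
  "weighted_graph X w \<longleftrightarrow> finite X \<and> (\<forall>u\<in>X. \<forall>v\<in>X. w u v = w v u \<and> 0 \<le> w u v)"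

definition connected_wgraph :: "'a set \<Rightarrow> ('a \<Rightarrow> 'a \<Rightarrow> real) \<Rightarrow> bool" where
  "connected_wgraph X w \<longleftrightarrow>
     (\<forall>u\<in>X. \<forall>v\<in>X. (u, v) \<in> {(a, b). a \<in> X \<and> b \<in> X \<and> 0 < w a b}\<^sup>*)"

definition unit_flow :: "'a set \<Rightarrow> ('a \<Rightarrow> 'a \<Rightarrow> real) \<Rightarrow> ('a \<Rightarrow> real) \<Rightarrow> 'a set
    \<Rightarrow> ('a \<Rightarrow> 'a \<Rightarrow> real) \<Rightarrow> bool" where
  "unit_flow X w \<sigma> M p \<longleftrightarrow>
     (\<forall>u\<in>X. \<forall>v\<in>X. w u v = 0 \<longrightarrow> p u v = 0) \<and>
     (\<forall>u\<in>X. \<forall>v\<in>X. p u v = - p v u) \<and>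
     (\<forall>u\<in>X - M. (\<Sum>v\<in>X. p u v) = \<sigma> u) \<and>
     (\<Sum>u\<in>M. \<Sum>v\<in>X - M. p u v) = -1"

text \<open>Energy: sum over unordered pairs {u,v} of p_uv^2/w_uv. For antisymmetric p we have
  p_uu = 0, and each unordered pair {u,v} with u \<noteq> v appears twice among ordered pairs,
  so this is half the sum over ordered pairs. (Terms with w_uv = 0 have p_uv = 0 and vanish.)\<close>
definition flow_energy :: "'a set \<Rightarrow> ('a \<Rightarrow> 'a \<Rightarrow> real) \<Rightarrow> ('a \<Rightarrow> 'a \<Rightarrow> real) \<Rightarrow> real" where
  "flow_energy X w p = (\<Sum>u\<in>X. \<Sum>v\<in>X. (p u v)\<^sup>2 / w u v) / 2"

definition eff_res :: "'a set \<Rightarrow> ('a \<Rightarrow> 'a \<Rightarrow> real) \<Rightarrow> ('a \<Rightarrow> real) \<Rightarrow> 'a set \<Rightarrow> real" where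
  "eff_res X w \<sigma> M = Inf {flow_energy X w p | p. unit_flow X w \<sigma> M p}"

definition is_distribution_on :: "'a set \<Rightarrow> ('a \<Rightarrow> real) \<Rightarrow> bool" where
  "is_distribution_on S \<sigma> \<longleftrightarrow> finite S \<and> (\<forall>u. 0 \<le> \<sigma> u) \<and> (\<forall>u. u \<notin> S \<longrightarrow> \<sigma> u = 0)
      \<and> (\<Sum>u\<in>S. \<sigma> u) = 1"

definition eff_res_set :: "'a set \<Rightarrow> ('a \<Rightarrow> 'a \<Rightarrow> real) \<Rightarrow> 'a set \<Rightarrow> 'a set \<Rightarrow> real" where
  "eff_res_set X w S M = Inf {eff_res X w \<sigma> M | \<sigma>. is_distribution_on S \<sigma>}"

definition commute_C :: "'a set \<Rightarrow> ('a \<Rightarrow> 'a \<Rightarrow> real) \<Rightarrow> 'a set \<Rightarrow> 'a set \<Rightarrow> real" where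
  "commute_C X w S M = wtotal X w * eff_res_set X w S M"

definition walk_prob :: "'a set \<Rightarrow> ('a \<Rightarrow> 'a \<Rightarrow> real) \<Rightarrow> ('a \<Rightarrow> real) \<Rightarrow> nat
    \<Rightarrow> ('a list \<Rightarrow> bool) \<Rightarrow> real" where
  "walk_prob X w \<mu> n E = (\<Sum>ys\<in>{ys. length ys = n \<and> set ys \<subseteq> X}.
      if E ys then \<mu> (ys ! 0) * (\<Prod>i<n - 1. trans_prob X w (ys ! i) (ys ! Suc i)) else 0)"

text \<open>Event {tau_M < tau_S^+ and tau_S^+ < T}, determined by Y_0..Y_{T-1}:
  some i with 0<i<T is the first positive time in S, and some j<i has Y_j in M.\<close>
definition hit_then_return :: "'a set \<Rightarrow> 'a set \<Rightarrow> nat \<Rightarrow> 'a list \<Rightarrow> bool" where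
  "hit_then_return M S T ys \<longleftrightarrow>
     (\<exists>i. 0 < i \<and> i < T \<and> ys ! i \<in> S \<and> (\<forall>k. 0 < k \<and> k < i \<longrightarrow> ys ! k \<notin> S)
        \<and> (\<exists>j<i. ys ! j \<in> M))"

end

theory Submission
  imports Defs
begin

text \<open>Write \<open>T = n + 1\<close>. After leaving \<open>Y\<^sub>0\<close>, a trajectory of length \<open>n\<close> either returns
  to \<open>S\<close> after visiting \<open>M\<close> (the event in question), or does not return to \<open>S\<close> at all, or
  returns to \<open>S\<close> before visiting \<open>M\<close>. By stationarity (Kac's lemma truncated at time \<open>n\<close>)
  the second event has probability at most \<open>1 / (T \<pi>(S)) \<le> p/2\<close> under \<open>\<pi>|\<^sub>S\<close>. For the third,
  let \<open>g\<close> be the probability of reaching \<open>S\<close> before \<open>M\<close> within \<open>n\<close> steps; its Dirichlet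
  energy is at most \<open>\<Sum>\<^sub>s\<^sub>\<in>\<^sub>S w\<^sub>s (1 - q(s))\<close>, where \<open>q(s)\<close> is the probability of
  the third event from \<open>s\<close>, and pairing \<open>g\<close> with any unit flow from \<open>S\<close> to \<open>M\<close> shows
  (Thomson's principle) that \<open>1/C\<^sub>S\<^sub>,\<^sub>M\<close> is at most that energy divided by \<open>W\<close>. Hence the
  third event has probability at most \<open>1 - p\<close>, which leaves \<open>p/2\<close> for the first.\<close>

section \<open>Probabilities of finite trajectories\<close>

definition paths :: "'a set \<Rightarrow> nat \<Rightarrow> 'a list set" where
  "paths X n = {ys. length ys = n \<and> set ys \<subseteq> X}"

fun path_weight :: "'a set \<Rightarrow> ('a \<Rightarrow> 'a \<Rightarrow> real) \<Rightarrow> 'a \<Rightarrow> 'a list \<Rightarrow> real" where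
  "path_weight X w u [] = 1"
| "path_weight X w u (v # vs) = trans_prob X w u v * path_weight X w v vs"

definition path_prob :: "'a set \<Rightarrow> ('a \<Rightarrow> 'a \<Rightarrow> real) \<Rightarrow> 'a \<Rightarrow> nat \<Rightarrow> ('a list \<Rightarrow> bool) \<Rightarrow> real"
  where "path_prob X w u k E = (\<Sum>vs\<in>paths X k. if E vs then path_weight X w u vs else 0)"

lemma paths_0 [simp]: "paths X 0 = {[]}"
  by (auto simp: paths_def)

lemma sum_paths_Suc:
  assumes "finite X"
  shows "(\<Sum>ys\<in>paths X (Suc n). F ys) = (\<Sum>u\<in>X. \<Sum>vs\<in>paths X n. F (u # vs))"
proof -
  have "paths X (Suc n) = (\<lambda>(u, vs). u # vs) ` (X \<times> paths X n)"
    by (auto simp: paths_def length_Suc_conv image_iff)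
  moreover have "inj_on (\<lambda>(u, vs). u # vs) (X \<times> paths X n)"
    by (auto simp: inj_on_def)
  ultimately show ?thesis
    by (simp add: sum.reindex sum.cartesian_product case_prod_unfold)
qed

lemma prod_trans_prob_eq_path_weight:
  "(\<Prod>i<length vs. trans_prob X w ((u # vs) ! i) ((u # vs) ! Suc i)) = path_weight X w u vs"
proof (induction vs arbitrary: u)
  case Nil
  then show ?case by simp
next
  case (Cons v vs)
  show ?case
    by (simp only: length_Cons prod.lessThan_Suc_shift) (simp add: Cons[symmetric])
qed

lemma walk_prob_Suc:
  assumes "finite X"
  shows "walk_prob X w \<mu> (Suc n) E = (\<Sum>u\<in>X. \<mu> u * path_prob X w u n (\<lambda>vs. E (u # vs)))"
proof -
  have "walk_prob X w \<mu> (Suc n) E = (\<Sum>ys\<in>paths X (Suc n).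
      if E ys then \<mu> (ys ! 0) * (\<Prod>i<Suc n - 1. trans_prob X w (ys ! i) (ys ! Suc i)) else 0)"
    unfolding walk_prob_def paths_def by simp
  also have "\<dots> = (\<Sum>u\<in>X. \<Sum>vs\<in>paths X n. if E (u # vs) then \<mu> u * path_weight X w u vs else 0)"
    unfolding sum_paths_Suc[OF assms]
    by (intro sum.cong refl) (auto simp: paths_def prod_trans_prob_eq_path_weight[symmetric])
  also have "\<dots> = (\<Sum>u\<in>X. \<mu> u * path_prob X w u n (\<lambda>vs. E (u # vs)))"
    unfolding path_prob_def by (simp add: sum_distrib_left if_distrib cong: if_cong)
  finally show ?thesis .
qed

lemma path_prob_0: "path_prob X w u 0 E = (if E [] then 1 else 0)"
  by (simp add: path_prob_def)

lemma path_prob_Suc: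
  assumes "finite X"
  shows "path_prob X w u (Suc k) E = (\<Sum>v\<in>X. trans_prob X w u v * path_prob X w v k (\<lambda>vs. E (v # vs)))"
  unfolding path_prob_def sum_paths_Suc[OF assms]
  by (simp add: sum_distrib_left if_distrib cong: if_cong)

lemma path_prob_False [simp]: "path_prob X w u k (\<lambda>_. False) = 0"
  by (simp add: path_prob_def)

section \<open>Three ways to continue a trajectory\<close>

fun visits_before :: "'a set \<Rightarrow> 'a set \<Rightarrow> 'a list \<Rightarrow> bool" where
  "visits_before S M [] = False"
| "visits_before S M (v # vs) = (v \<in> S \<or> (v \<notin> M \<and> visits_before S M vs))"

lemma visits_before_intro:
  assumes "i < length vs" and "vs ! i \<in> S" and "\<forall>k<i. vs ! k \<notin> M"
  shows "visits_before S M vs"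
  using assms
proof (induction vs arbitrary: i)
  case (Cons v vs)
  show ?case
  proof (cases i)
    case (Suc j)
    have "\<forall>k<j. vs ! k \<notin> M"
      using Cons.prems(3) Suc by auto
    with Cons.prems Suc have "visits_before S M vs"
      by (intro Cons.IH[of j]) auto
    moreover have "v \<notin> M"
      using Cons.prems(3) Suc by auto
    ultimately show ?thesis by simp
  qed (use Cons.prems in simp)
qed simp

lemma hit_then_return_cases:
  assumes "length vs = n"
  shows "hit_then_return M S (Suc n) (s # vs) \<or> (\<forall>x\<in>set vs. x \<notin> S) \<or> visits_before S M vs"
proof (cases "\<exists>i<length vs. vs ! i \<in> S")
  case True
  define i where "i = (LEAST i. i < length vs \<and> vs ! i \<in> S)"
  from True obtain i0 where "i0 < length vs \<and> vs ! i0 \<in> S" by blast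
  then have i: "i < length vs" "vs ! i \<in> S"
    unfolding i_def by (metis (mono_tags, lifting) LeastI)+
  have before_i: "vs ! k \<notin> S" if "k < i" for k
    using that i(1) not_less_Least unfolding i_def by fastforce
  show ?thesis
  proof (cases "\<exists>j<Suc i. (s # vs) ! j \<in> M")
    case True
    then have "hit_then_return M S (Suc n) (s # vs)"
      unfolding hit_then_return_def using i before_i assms
      by (intro exI[of _ "Suc i"]) (auto simp: less_Suc_eq_0_disj)
    then show ?thesis ..
  next
    case False
    then have "visits_before S M vs"
      using i by (intro visits_before_intro[of i]) auto
    then show ?thesis by blast
  qed
qed (auto simp: in_set_conv_nth)

section \<open>Flows and the Dirichlet form\<close>

definition dirichlet_form :: "'a set \<Rightarrow> ('a \<Rightarrow> 'a \<Rightarrow> real) \<Rightarrow> ('a \<Rightarrow> real) \<Rightarrow> real" where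
  "dirichlet_form X w g = (\<Sum>u\<in>X. \<Sum>v\<in>X. w u v * (g u - g v)\<^sup>2) / 2"

definition flow_with_divergence ::
    "'a set \<Rightarrow> ('a \<Rightarrow> 'a \<Rightarrow> real) \<Rightarrow> ('a \<Rightarrow> real) \<Rightarrow> ('a \<Rightarrow> 'a \<Rightarrow> real) \<Rightarrow> bool" where
  "flow_with_divergence X w d f \<longleftrightarrow>
     (\<forall>u\<in>X. \<forall>v\<in>X. w u v = 0 \<longrightarrow> f u v = 0) \<and>
     (\<forall>u\<in>X. \<forall>v\<in>X. f u v = - f v u) \<and>
     (\<forall>u\<in>X. (\<Sum>v\<in>X. f u v) = d u)"

lemma flow_with_divergence_zero: "flow_with_divergence X w (\<lambda>_. 0) (\<lambda>_ _. 0)"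
  by (simp add: flow_with_divergence_def)

lemma flow_with_divergence_add:
  assumes "flow_with_divergence X w d f" and "flow_with_divergence X w d' f'"
  shows "flow_with_divergence X w (\<lambda>u. d u + d' u) (\<lambda>u v. f u v + f' u v)"
  unfolding flow_with_divergence_def
proof (intro conjI ballI impI)
  fix u v assume uv: "u \<in> X" "v \<in> X"
  then show "w u v = 0 \<Longrightarrow> f u v + f' u v = 0"
    using assms unfolding flow_with_divergence_def by (metis add.right_neutral)
  show "f u v + f' u v = - (f v u + f' v u)"
    using assms uv unfolding flow_with_divergence_def by (metis minus_add_distrib)
next
  fix u assume "u \<in> X"
  then show "(\<Sum>v\<in>X. f u v + f' u v) = d u + d' u"
    using assms unfolding flow_with_divergence_def sum.distrib by metis
qed

lemma flow_with_divergence_scale: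
  assumes "flow_with_divergence X w d f"
  shows "flow_with_divergence X w (\<lambda>u. c * d u) (\<lambda>u v. c * f u v)"
  unfolding flow_with_divergence_def
proof (intro conjI ballI impI)
  fix u v assume uv: "u \<in> X" "v \<in> X"
  then show "w u v = 0 \<Longrightarrow> c * f u v = 0"
    using assms unfolding flow_with_divergence_def by (metis mult_zero_right)
  show "c * f u v = - (c * f v u)"
    using assms uv unfolding flow_with_divergence_def by (metis mult_minus_right)
next
  fix u assume "u \<in> X"
  then show "(\<Sum>v\<in>X. c * f u v) = c * d u"
    using assms unfolding flow_with_divergence_def sum_distrib_left[symmetric] by metis
qed

lemma flow_with_divergence_sum:
  assumes "finite I" and "\<And>i. i \<in> I \<Longrightarrow> flow_with_divergence X w (D i) (F i)"
  shows "flow_with_divergence X w (\<lambda>u. \<Sum>i\<in>I. c i * D i u) (\<lambda>u v. \<Sum>i\<in>I. c i * F i u v)"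
  using assms
proof (induction I rule: finite_induct)
  case empty
  then show ?case by (simp add: flow_with_divergence_zero)
next
  case (insert i I)
  then show ?case
    using flow_with_divergence_add[OF flow_with_divergence_scale[of X w "D i" "F i" "c i"]] by simp
qed

lemma antisym_double_sum_eq_0:
  assumes "\<And>u v. u \<in> A \<Longrightarrow> v \<in> A \<Longrightarrow> f u v = - f v u"
  shows "(\<Sum>u\<in>A. \<Sum>v\<in>A. f u v) = (0::real)"
proof -
  have "(\<Sum>u\<in>A. \<Sum>v\<in>A. f u v) = (\<Sum>v\<in>A. \<Sum>u\<in>A. - f v u)"
    by (subst sum.swap) (intro sum.cong refl; metis assms)
  then show ?thesis by (simp add: sum_negf)
qed

lemma mult_le_weighted_squares:
  fixes a b c l :: real
  assumes "0 \<le> c" and "c = 0 \<Longrightarrow> a = 0" and "0 < l"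
  shows "a * b \<le> (a\<^sup>2 / c) / (2 * l) + l / 2 * (c * b\<^sup>2)"
proof (cases "c = 0")
  case False
  with assms have "0 < c" by simp
  have "0 \<le> (a - l * c * b)\<^sup>2 / (2 * l * c)"
    using \<open>0 < c\<close> assms(3) by simp
  also have "\<dots> = (a\<^sup>2 / c) / (2 * l) + l / 2 * (c * b\<^sup>2) - a * b"
    using \<open>0 < c\<close> assms(3) by (simp add: field_simps power2_eq_square)
  finally show ?thesis by simp
qed (use assms in simp)

section \<open>The random walk on a weighted graph\<close>

locale random_walk_graph =
  fixes X :: "'a set" and w :: "'a \<Rightarrow> 'a \<Rightarrow> real"
  assumes finite_vertices: "finite X"
    and weight_sym: "\<And>u v. u \<in> X \<Longrightarrow> v \<in> X \<Longrightarrow> w u v = w v u"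
    and weight_nonneg: "\<And>u v. u \<in> X \<Longrightarrow> v \<in> X \<Longrightarrow> 0 \<le> w u v"
    and wdeg_pos: "\<And>u. u \<in> X \<Longrightarrow> 0 < wdeg X w u"
    and vertices_nonempty: "X \<noteq> {}"
begin

abbreviation "P \<equiv> trans_prob X w"
abbreviation "\<pi> \<equiv> stat_dist X w"

lemma trans_prob_nonneg: "u \<in> X \<Longrightarrow> v \<in> X \<Longrightarrow> 0 \<le> P u v"
  unfolding trans_prob_def using weight_nonneg wdeg_pos by (simp add: less_imp_le)

lemma sum_trans_prob: "u \<in> X \<Longrightarrow> (\<Sum>v\<in>X. P u v) = 1"
  unfolding trans_prob_def using wdeg_pos[of u]
  by (simp add: sum_divide_distrib[symmetric] wdeg_def)

lemma weight_eq_wdeg_trans_prob: "u \<in> X \<Longrightarrow> w u v = wdeg X w u * P u v"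
  unfolding trans_prob_def using wdeg_pos[of u] by simp

lemma wtotal_pos: "0 < wtotal X w"
proof -
  obtain u where "u \<in> X" using vertices_nonempty by auto
  have "wtotal X w = (\<Sum>u\<in>X. wdeg X w u)" by (simp add: wtotal_def wdeg_def)
  also have "\<dots> > 0"
    using \<open>u \<in> X\<close> wdeg_pos by (intro sum_pos2[OF finite_vertices]) (auto intro: less_imp_le)
  finally show ?thesis .
qed

lemma stat_dist_pos: "u \<in> X \<Longrightarrow> 0 < \<pi> u"
  unfolding stat_dist_def using wdeg_pos wtotal_pos by simp

lemma sum_stat_dist: "(\<Sum>u\<in>X. \<pi> u) = 1"
  unfolding stat_dist_def using wtotal_pos
  by (simp add: sum_divide_distrib[symmetric] wtotal_def wdeg_def)

lemma stat_dist_stationary: "v \<in> X \<Longrightarrow> (\<Sum>u\<in>X. \<pi> u * P u v) = \<pi> v"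
proof -
  assume v: "v \<in> X"
  have "(\<Sum>u\<in>X. \<pi> u * P u v) = (\<Sum>u\<in>X. w v u / wtotal X w)"
  proof (intro sum.cong refl)
    fix u assume u: "u \<in> X"
    then have "wdeg X w u \<noteq> 0" using wdeg_pos[of u] by simp
    then show "\<pi> u * P u v = w v u / wtotal X w"
      using weight_sym[OF u v] by (simp add: stat_dist_def trans_prob_def)
  qed
  also have "\<dots> = \<pi> v" by (simp add: stat_dist_def wdeg_def sum_divide_distrib)
  finally show ?thesis .
qed

lemma path_weight_nonneg: "u \<in> X \<Longrightarrow> set vs \<subseteq> X \<Longrightarrow> 0 \<le> path_weight X w u vs"
  by (induction vs arbitrary: u) (auto intro!: mult_nonneg_nonneg trans_prob_nonneg)

lemma path_prob_nonneg: "u \<in> X \<Longrightarrow> 0 \<le> path_prob X w u k E"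
  unfolding path_prob_def by (intro sum_nonneg) (auto simp: paths_def intro: path_weight_nonneg)

lemma path_prob_True: "u \<in> X \<Longrightarrow> path_prob X w u k (\<lambda>_. True) = 1"
  by (induction k arbitrary: u) (simp_all add: path_prob_0 path_prob_Suc[OF finite_vertices] sum_trans_prob)

lemma path_prob_mono:
  assumes "u \<in> X" and "\<And>vs. vs \<in> paths X k \<Longrightarrow> E vs \<Longrightarrow> E' vs"
  shows "path_prob X w u k E \<le> path_prob X w u k E'"
  unfolding path_prob_def using assms
  by (intro sum_mono) (auto simp: paths_def intro: path_weight_nonneg)

lemma path_prob_disj_le:
  assumes "u \<in> X"
  shows "path_prob X w u k (\<lambda>vs. E vs \<or> E' vs) \<le> path_prob X w u k E + path_prob X w u k E'"
  unfolding path_prob_def sum.distrib[symmetric] using assms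
  by (intro sum_mono) (auto simp: paths_def intro: path_weight_nonneg)

definition escape_prob :: "'a set \<Rightarrow> nat \<Rightarrow> 'a \<Rightarrow> real" where
  "escape_prob S k u = path_prob X w u k (\<lambda>vs. \<forall>x\<in>set vs. x \<notin> S)"

lemma escape_prob_0 [simp]: "escape_prob S 0 u = 1"
  by (simp add: escape_prob_def path_prob_0)

lemma escape_prob_Suc:
  "escape_prob S (Suc k) u = (\<Sum>v\<in>X. P u v * (if v \<in> S then 0 else escape_prob S k v))"
  unfolding escape_prob_def path_prob_Suc[OF finite_vertices]
  by (intro sum.cong refl) auto

lemma escape_prob_nonneg: "u \<in> X \<Longrightarrow> 0 \<le> escape_prob S k u"
  unfolding escape_prob_def by (rule path_prob_nonneg)

lemma escape_prob_Suc_le: "u \<in> X \<Longrightarrow> escape_prob S (Suc k) u \<le> escape_prob S k u"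
proof (induction k arbitrary: u)
  case 0
  have "escape_prob S 1 u \<le> (\<Sum>v\<in>X. P u v)"
    unfolding One_nat_def escape_prob_Suc escape_prob_0
    by (intro sum_mono) (auto intro: trans_prob_nonneg 0)
  then show ?case using sum_trans_prob[OF 0] by simp
next
  case (Suc k)
  have "escape_prob S (Suc (Suc k)) u
      = (\<Sum>v\<in>X. P u v * (if v \<in> S then 0 else escape_prob S (Suc k) v))"
    by (rule escape_prob_Suc)
  also have "\<dots> \<le> (\<Sum>v\<in>X. P u v * (if v \<in> S then 0 else escape_prob S k v))"
    by (intro sum_mono mult_left_mono) (auto intro: trans_prob_nonneg Suc)
  also have "\<dots> = escape_prob S (Suc k) u"
    by (rule escape_prob_Suc[symmetric])
  finally show ?case .
qed

lemma escape_prob_antimono: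
  assumes "u \<in> X" and "k \<le> n"
  shows "escape_prob S n u \<le> escape_prob S k u"
  using assms(2) by (induction n rule: dec_induct) (auto intro: order_trans escape_prob_Suc_le assms(1))

text \<open>Stationarity turns one more step of the walk into one more term of the time sum:
  this is Kac's lemma truncated at time \<open>n\<close>.\<close>
lemma stationary_escape_sum:
  assumes "S \<subseteq> X"
  shows "(\<Sum>k\<le>n. \<Sum>s\<in>S. \<pi> s * escape_prob S k s) + (\<Sum>v\<in>X - S. \<pi> v * escape_prob S n v) = 1"
proof (induction n)
  case 0
  show ?case
    using sum.subset_diff[OF assms finite_vertices, of \<pi>] sum_stat_dist by simp
next
  case (Suc n)
  have "(\<Sum>s\<in>S. \<pi> s * escape_prob S (Suc n) s) + (\<Sum>v\<in>X - S. \<pi> v * escape_prob S (Suc n) v)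
      = (\<Sum>u\<in>X. \<pi> u * escape_prob S (Suc n) u)"
    using sum.subset_diff[OF assms finite_vertices, of "\<lambda>u. \<pi> u * escape_prob S (Suc n) u"]
    by (simp add: add.commute)
  also have "\<dots> = (\<Sum>u\<in>X. \<Sum>v\<in>X. \<pi> u * P u v * (if v \<in> S then 0 else escape_prob S n v))"
    by (simp add: escape_prob_Suc sum_distrib_left mult.assoc)
  also have "\<dots> = (\<Sum>v\<in>X. (\<Sum>u\<in>X. \<pi> u * P u v) * (if v \<in> S then 0 else escape_prob S n v))"
    by (subst sum.swap) (simp add: sum_distrib_right)
  also have "\<dots> = (\<Sum>v\<in>X - S. \<pi> v * escape_prob S n v)"
    by (intro sum.mono_neutral_cong_right finite_vertices) (auto simp: stat_dist_stationary)
  finally show ?case using Suc by simp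
qed

lemma stationary_escape_bound:
  assumes "S \<subseteq> X"
  shows "real (Suc n) * (\<Sum>s\<in>S. \<pi> s * escape_prob S n s) \<le> 1"
proof -
  have "real (Suc n) * (\<Sum>s\<in>S. \<pi> s * escape_prob S n s) = (\<Sum>k\<le>n. \<Sum>s\<in>S. \<pi> s * escape_prob S n s)"
    by simp
  also have "\<dots> \<le> (\<Sum>k\<le>n. \<Sum>s\<in>S. \<pi> s * escape_prob S k s)"
    using assms stat_dist_pos
    by (intro sum_mono mult_left_mono escape_prob_antimono) (auto simp: less_imp_le)
  also have "\<dots> \<le> 1"
    using stationary_escape_sum[OF assms, of n] stat_dist_pos
    by (smt (verit) Diff_iff escape_prob_nonneg mult_nonneg_nonneg sum_nonneg)
  finally show ?thesis .
qed

definition return_prob :: "'a set \<Rightarrow> 'a set \<Rightarrow> nat \<Rightarrow> 'a \<Rightarrow> real" where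
  "return_prob S M k u = path_prob X w u k (visits_before S M)"

definition return_potential :: "'a set \<Rightarrow> 'a set \<Rightarrow> nat \<Rightarrow> 'a \<Rightarrow> real" where
  "return_potential S M k v = (if v \<in> S then 1 else if v \<in> M then 0 else return_prob S M k v)"

lemma return_prob_0 [simp]: "return_prob S M 0 u = 0"
  by (simp add: return_prob_def path_prob_0)

lemma return_prob_Suc: "return_prob S M (Suc k) u = (\<Sum>v\<in>X. P u v * return_potential S M k v)"
  unfolding return_prob_def path_prob_Suc[OF finite_vertices]
  by (intro sum.cong refl) (auto simp: path_prob_True return_potential_def return_prob_def)

lemma return_prob_nonneg: "u \<in> X \<Longrightarrow> 0 \<le> return_prob S M k u"
  unfolding return_prob_def by (rule path_prob_nonneg)

lemma return_prob_Suc_ge: "u \<in> X \<Longrightarrow> return_prob S M k u \<le> return_prob S M (Suc k) u"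
proof (induction k arbitrary: u)
  case 0
  then show ?case by (simp add: return_prob_nonneg)
next
  case (Suc k)
  have "return_prob S M (Suc k) u = (\<Sum>v\<in>X. P u v * return_potential S M k v)"
    by (rule return_prob_Suc)
  also have "\<dots> \<le> (\<Sum>v\<in>X. P u v * return_potential S M (Suc k) v)"
    by (intro sum_mono mult_left_mono) (auto intro: trans_prob_nonneg Suc simp: return_potential_def)
  also have "\<dots> = return_prob S M (Suc (Suc k)) u"
    by (rule return_prob_Suc[symmetric])
  finally show ?case .
qed

lemma dirichlet_form_eq:
  "dirichlet_form X w g = (\<Sum>u\<in>X. g u * (wdeg X w u * g u - (\<Sum>v\<in>X. w u v * g v)))"
proof -
  have swap: "(\<Sum>u\<in>X. \<Sum>v\<in>X. w u v * (g v)\<^sup>2) = (\<Sum>u\<in>X. \<Sum>v\<in>X. w u v * (g u)\<^sup>2)"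
    by (subst sum.swap) (intro sum.cong refl; metis weight_sym)
  have "(\<Sum>u\<in>X. \<Sum>v\<in>X. w u v * (g u - g v)\<^sup>2)
      = (\<Sum>u\<in>X. \<Sum>v\<in>X. w u v * (g u)\<^sup>2) + (\<Sum>u\<in>X. \<Sum>v\<in>X. w u v * (g v)\<^sup>2)
        - 2 * (\<Sum>u\<in>X. \<Sum>v\<in>X. w u v * g u * g v)"
    by (simp add: power2_diff algebra_simps sum.distrib sum_subtractf sum_distrib_left)
  also have "\<dots> = 2 * (\<Sum>u\<in>X. g u * (wdeg X w u * g u - (\<Sum>v\<in>X. w u v * g v)))"
    unfolding swap wdeg_def
    by (simp add: algebra_simps power2_eq_square sum_subtractf sum_distrib_left sum_distrib_right)
  finally show ?thesis unfolding dirichlet_form_def by simp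
qed

text \<open>The potential is superharmonic off \<open>S \<union> M\<close> (its value grows with one more step), which
  leaves only the boundary terms at \<open>S\<close>.\<close>
lemma dirichlet_form_return_potential_le:
  assumes "S \<subseteq> X - M"
  shows "dirichlet_form X w (return_potential S M n) \<le> (\<Sum>s\<in>S. wdeg X w s * (1 - return_prob S M n s))"
proof -
  let ?g = "return_potential S M n"
  let ?t = "\<lambda>u. ?g u * (wdeg X w u * ?g u - (\<Sum>v\<in>X. w u v * ?g v))"
  have next_step: "(\<Sum>v\<in>X. w u v * ?g v) = wdeg X w u * return_prob S M (Suc n) u" if "u \<in> X" for u
    using that by (simp add: return_prob_Suc weight_eq_wdeg_trans_prob sum_distrib_left mult.assoc)
  have "S \<subseteq> X" using assms by auto
  then have "dirichlet_form X w ?g = (\<Sum>u\<in>S. ?t u) + (\<Sum>u\<in>X - S. ?t u)"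
    unfolding dirichlet_form_eq using sum.subset_diff[of S X ?t] finite_vertices by (simp add: add.commute)
  also have "(\<Sum>u\<in>X - S. ?t u) \<le> 0"
  proof (intro sum_nonpos)
    fix u assume u: "u \<in> X - S"
    show "?t u \<le> 0"
    proof (cases "u \<in> M")
      case False
      then have "?t u = return_prob S M n u * (wdeg X w u * (return_prob S M n u - return_prob S M (Suc n) u))"
        using u next_step[of u] by (simp add: return_potential_def algebra_simps)
      also have "\<dots> \<le> 0"
        using u return_prob_nonneg[of u S M n] return_prob_Suc_ge[of u S M n] wdeg_pos[of u]
        by (intro mult_nonneg_nonpos mult_nonneg_nonpos) auto
      finally show ?thesis .
    qed (use u in \<open>simp add: return_potential_def\<close>)
  qed
  also have "(\<Sum>u\<in>S. ?t u) \<le> (\<Sum>s\<in>S. wdeg X w s * (1 - return_prob S M n s))"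
  proof (intro sum_mono)
    fix s assume s: "s \<in> S"
    then have sX: "s \<in> X" using assms by auto
    have "?t s = wdeg X w s * (1 - return_prob S M (Suc n) s)"
      using s next_step[OF sX] by (simp add: return_potential_def algebra_simps)
    also have "\<dots> \<le> wdeg X w s * (1 - return_prob S M n s)"
      using return_prob_Suc_ge[OF sX, of S M n] wdeg_pos[OF sX] by (intro mult_left_mono) auto
    finally show "?t s \<le> wdeg X w s * (1 - return_prob S M n s)" .
  qed
  finally show ?thesis by simp
qed

lemma edge_flow:
  assumes "y \<in> X" "z \<in> X" "0 < w y z"
  shows "flow_with_divergence X w (\<lambda>u. of_bool (u = y) - of_bool (u = z))
           (\<lambda>u v. of_bool (u = y \<and> v = z) - of_bool (u = z \<and> v = y))"
  unfolding flow_with_divergence_def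
proof (intro conjI ballI impI)
  fix u v assume "u \<in> X" "v \<in> X" "w u v = 0"
  then show "of_bool (u = y \<and> v = z) - of_bool (u = z \<and> v = y) = (0::real)"
    using assms weight_sym[of y z] by auto
next
  fix u v
  show "of_bool (u = y \<and> v = z) - of_bool (u = z \<and> v = y)
      = - (of_bool (v = y \<and> u = z) - of_bool (v = z \<and> u = y) :: real)"
    by (simp add: conj_commute)
next
  fix u :: 'a
  have "(\<Sum>v\<in>X. of_bool (u = a \<and> v = b)) = (of_bool (u = a) :: real)" if "b \<in> X" for a b
    using that finite_vertices by (cases "u = a") simp_all
  then show "(\<Sum>v\<in>X. of_bool (u = y \<and> v = z) - of_bool (u = z \<and> v = y))
      = (of_bool (u = y) - of_bool (u = z) :: real)"
    using assms by (simp only: sum_subtractf)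
qed

lemma path_flow:
  assumes "(a, b) \<in> {(a, b). a \<in> X \<and> b \<in> X \<and> 0 < w a b}\<^sup>*"
  shows "\<exists>f. flow_with_divergence X w (\<lambda>u. of_bool (u = a) - of_bool (u = b)) f"
  using assms
proof (induction rule: converse_rtrancl_induct)
  case base
  show ?case using flow_with_divergence_zero by fastforce
next
  case (step y z)
  then obtain f where "flow_with_divergence X w (\<lambda>u. of_bool (u = z) - of_bool (u = b)) f"
    by blast
  moreover have "y \<in> X" "z \<in> X" "0 < w y z"
    using step(1) by auto
  ultimately have "flow_with_divergence X w (\<lambda>u. of_bool (u = y) - of_bool (u = b))
      (\<lambda>u v. of_bool (u = y \<and> v = z) - of_bool (u = z \<and> v = y) + f u v)"
    using flow_with_divergence_add[OF edge_flow] by fastforce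
  then show ?case by blast
qed

text \<open>Superpose, with weights \<open>\<sigma> s\<close>, path flows from each \<open>s \<in> S\<close> to one fixed point of \<open>M\<close>.\<close>
lemma unit_flow_exists:
  assumes "connected_wgraph X w" and "M \<subseteq> X" and "m \<in> M" and "S \<subseteq> X - M"
    and \<sigma>: "is_distribution_on S \<sigma>"
  shows "\<exists>f. unit_flow X w \<sigma> M f"
proof -
  let ?\<delta> = "\<lambda>a u. of_bool (u = a) :: real"
  have "\<forall>s\<in>S. \<exists>f. flow_with_divergence X w (\<lambda>u. ?\<delta> s u - ?\<delta> m u) f"
    using assms(1-4) unfolding connected_wgraph_def by (blast intro: path_flow)
  then obtain F where F: "\<And>s. s \<in> S \<Longrightarrow> flow_with_divergence X w (\<lambda>u. ?\<delta> s u - ?\<delta> m u) (F s)"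
    by metis
  have "finite S" and \<sigma>_0: "\<And>u. u \<notin> S \<Longrightarrow> \<sigma> u = 0" and \<sigma>_sum: "(\<Sum>s\<in>S. \<sigma> s) = 1"
    using \<sigma> unfolding is_distribution_on_def by auto
  define f where "f u v = (\<Sum>s\<in>S. \<sigma> s * F s u v)" for u v
  have "flow_with_divergence X w (\<lambda>u. \<Sum>s\<in>S. \<sigma> s * (?\<delta> s u - ?\<delta> m u)) f"
    unfolding f_def by (rule flow_with_divergence_sum[OF \<open>finite S\<close> F])
  moreover have "(\<Sum>s\<in>S. \<sigma> s * (?\<delta> s u - ?\<delta> m u)) = \<sigma> u - ?\<delta> m u" for u
    using \<open>finite S\<close> \<sigma>_0 \<sigma>_sum
    by (cases "u \<in> S") (simp_all add: right_diff_distrib sum_subtractf sum_distrib_right[symmetric])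
  ultimately have f: "flow_with_divergence X w (\<lambda>u. \<sigma> u - ?\<delta> m u) f"
    by simp
  then have anti: "\<And>u v. u \<in> X \<Longrightarrow> v \<in> X \<Longrightarrow> f u v = - f v u"
    and div: "\<And>u. u \<in> X \<Longrightarrow> (\<Sum>v\<in>X. f u v) = \<sigma> u - ?\<delta> m u"
    unfolding flow_with_divergence_def by blast+
  have finM: "finite M" using assms(2) finite_vertices finite_subset by blast
  have "(\<Sum>u\<in>M. \<Sum>v\<in>X - M. f u v) = (\<Sum>u\<in>M. \<Sum>v\<in>X. f u v) - (\<Sum>u\<in>M. \<Sum>v\<in>M. f u v)"
  proof -
    have "(\<Sum>v\<in>X. f u v) = (\<Sum>v\<in>X - M. f u v) + (\<Sum>v\<in>M. f u v)" for u
      using sum.subset_diff[OF assms(2) finite_vertices, of "f u"] by simp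
    then show ?thesis by (simp add: sum.distrib)
  qed
  also have "(\<Sum>u\<in>M. \<Sum>v\<in>M. f u v) = 0"
    using assms(2) anti by (intro antisym_double_sum_eq_0) blast
  also have "(\<Sum>u\<in>M. \<Sum>v\<in>X. f u v) = (\<Sum>u\<in>M. - ?\<delta> m u)"
  proof (intro sum.cong refl)
    fix u assume "u \<in> M"
    with assms(2,4) have "u \<in> X" "u \<notin> S" by auto
    then show "(\<Sum>v\<in>X. f u v) = - ?\<delta> m u" using div \<sigma>_0 by simp
  qed
  also have "\<dots> = -1"
    using assms(3) finM by (simp add: sum_negf)
  finally have "(\<Sum>u\<in>M. \<Sum>v\<in>X - M. f u v) = -1" by simp
  moreover have "\<forall>u\<in>X - M. (\<Sum>v\<in>X. f u v) = \<sigma> u"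
    using div assms(3) by auto
  ultimately have "unit_flow X w \<sigma> M f"
    using f unfolding unit_flow_def flow_with_divergence_def by blast
  then show ?thesis by blast
qed

lemma flow_energy_nonneg: "0 \<le> flow_energy X w f"
  unfolding flow_energy_def by (intro divide_nonneg_pos sum_nonneg divide_nonneg_nonneg) (auto simp: weight_nonneg)

lemma dirichlet_form_nonneg: "0 \<le> dirichlet_form X w g"
  unfolding dirichlet_form_def by (intro divide_nonneg_pos sum_nonneg mult_nonneg_nonneg) (auto simp: weight_nonneg)

text \<open>Summation by parts: the pairing only sees the divergence of \<open>f\<close>, which is \<open>\<sigma>\<close> on
  \<open>X - M\<close>, and the values of \<open>g\<close>, which are \<open>1\<close> on \<open>S\<close> and \<open>0\<close> on \<open>M\<close>.\<close>
lemma unit_flow_pairing: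
  assumes f: "unit_flow X w \<sigma> M f" and \<sigma>: "is_distribution_on S \<sigma>"
    and "S \<subseteq> X - M" and "M \<subseteq> X"
    and g_S: "\<And>u. u \<in> S \<Longrightarrow> g u = 1" and g_M: "\<And>u. u \<in> M \<Longrightarrow> g u = 0"
  shows "(\<Sum>u\<in>X. \<Sum>v\<in>X. f u v * (g u - g v)) = 2"
proof -
  have anti: "\<And>u v. u \<in> X \<Longrightarrow> v \<in> X \<Longrightarrow> f u v = - f v u"
    and div: "\<And>u. u \<in> X - M \<Longrightarrow> (\<Sum>v\<in>X. f u v) = \<sigma> u"
    using f unfolding unit_flow_def by blast+
  have \<sigma>_0: "\<And>u. u \<notin> S \<Longrightarrow> \<sigma> u = 0" and \<sigma>_sum: "(\<Sum>u\<in>S. \<sigma> u) = 1"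
    using \<sigma> unfolding is_distribution_on_def by auto
  have "(\<Sum>u\<in>X. \<Sum>v\<in>X. f u v * g v) = (\<Sum>v\<in>X. \<Sum>u\<in>X. - (f v u * g v))"
    by (subst sum.swap) (intro sum.cong refl; metis anti minus_mult_left)
  then have swap: "(\<Sum>u\<in>X. \<Sum>v\<in>X. f u v * g v) = - (\<Sum>u\<in>X. \<Sum>v\<in>X. f u v * g u)"
    by (simp add: sum_negf)
  have "(\<Sum>u\<in>X. \<Sum>v\<in>X. f u v * g u) = (\<Sum>u\<in>X. g u * (\<Sum>v\<in>X. f u v))"
    by (simp add: sum_distrib_left mult.commute)
  also have "\<dots> = (\<Sum>u\<in>X - M. g u * (\<Sum>v\<in>X. f u v))"
    using assms(4) finite_vertices g_M by (intro sum.mono_neutral_right) auto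
  also have "\<dots> = (\<Sum>u\<in>X - M. \<sigma> u)"
    using g_S \<sigma>_0 div by (intro sum.cong refl) (metis mult_1 mult_zero_right)
  also have "\<dots> = 1"
    using assms(3) finite_vertices \<sigma>_0 \<sigma>_sum
    by (subst sum.mono_neutral_right[of "X - M" S]) auto
  finally show ?thesis
    using swap by (simp add: right_diff_distrib sum_subtractf)
qed

text \<open>The half of Thomson's principle that bounds energies from below: by AM-GM with a free
  parameter \<open>l\<close>, the pairing \<open>2\<close> is at most \<open>E(f)/l + l D(g)\<close>; then optimise over \<open>l\<close>.\<close>
lemma flow_energy_mult_dirichlet_ge_1:
  assumes f: "unit_flow X w \<sigma> M f" and \<sigma>: "is_distribution_on S \<sigma>"
    and "S \<subseteq> X - M" and "M \<subseteq> X"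
    and "\<And>u. u \<in> S \<Longrightarrow> g u = 1" and "\<And>u. u \<in> M \<Longrightarrow> g u = 0"
  shows "1 \<le> flow_energy X w f * dirichlet_form X w g"
proof -
  let ?E = "flow_energy X w f" and ?D = "dirichlet_form X w g"
  have supp: "\<And>u v. u \<in> X \<Longrightarrow> v \<in> X \<Longrightarrow> w u v = 0 \<Longrightarrow> f u v = 0"
    using f unfolding unit_flow_def by blast
  have amgm: "2 \<le> ?E / l + l * ?D" if "0 < l" for l
  proof -
    have "2 = (\<Sum>u\<in>X. \<Sum>v\<in>X. f u v * (g u - g v))"
      using unit_flow_pairing[OF assms] by simp
    also have "\<dots> \<le> (\<Sum>u\<in>X. \<Sum>v\<in>X. ((f u v)\<^sup>2 / w u v) / (2 * l) + l / 2 * (w u v * (g u - g v)\<^sup>2))"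
      using that by (intro sum_mono mult_le_weighted_squares) (auto simp: weight_nonneg supp)
    also have "\<dots> = ?E / l + l * ?D"
      unfolding flow_energy_def dirichlet_form_def
      by (simp add: sum.distrib sum_divide_distrib sum_distrib_left mult.assoc)
    finally show ?thesis .
  qed
  have "0 < ?D"
  proof (rule ccontr)
    assume "\<not> 0 < ?D"
    then have "?D = 0" using dirichlet_form_nonneg[of g] by simp
    then have "2 \<le> ?E / (?E + 1)" using amgm[of "?E + 1"] flow_energy_nonneg[of f] by simp
    then show False using flow_energy_nonneg[of f] by (simp add: field_simps)
  qed
  then show ?thesis using amgm[of "1 / ?D"] by (simp add: field_simps)
qed

lemma eff_res_set_ge_inverse_dirichlet:
  assumes "connected_wgraph X w" and "M \<subseteq> X" "M \<noteq> {}" and "S \<subseteq> X - M" "S \<noteq> {}"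
    and g_S: "\<And>u. u \<in> S \<Longrightarrow> g u = 1" and g_M: "\<And>u. u \<in> M \<Longrightarrow> g u = 0"
  shows "0 < dirichlet_form X w g" and "1 / dirichlet_form X w g \<le> eff_res_set X w S M"
proof -
  let ?D = "dirichlet_form X w g"
  obtain m where "m \<in> M" using assms(3) by auto
  obtain s where "s \<in> S" using assms(5) by auto
  have "finite S" using assms(4) finite_vertices finite_subset by blast
  have flow: "\<exists>f. unit_flow X w \<sigma> M f" if "is_distribution_on S \<sigma>" for \<sigma>
    using unit_flow_exists[OF assms(1,2) \<open>m \<in> M\<close> assms(4) that] .
  have energy: "1 \<le> flow_energy X w f * ?D" if "is_distribution_on S \<sigma>" "unit_flow X w \<sigma> M f" for \<sigma> f
    using flow_energy_mult_dirichlet_ge_1[OF that(2,1) assms(4,2) g_S g_M] .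
  have point_mass: "is_distribution_on S (\<lambda>u. of_bool (u = s))"
    using \<open>s \<in> S\<close> \<open>finite S\<close> by (auto simp: is_distribution_on_def)
  with flow obtain f where "unit_flow X w (\<lambda>u. of_bool (u = s)) M f" by blast
  with energy[OF point_mass] dirichlet_form_nonneg[of g] show D_pos: "0 < ?D"
    by (metis less_eq_real_def mult_zero_right not_one_le_zero)
  have eff_res: "1 / ?D \<le> eff_res X w \<sigma> M" if \<sigma>: "is_distribution_on S \<sigma>" for \<sigma>
    unfolding eff_res_def
  proof (rule cInf_greatest)
    show "{flow_energy X w f |f. unit_flow X w \<sigma> M f} \<noteq> {}" using flow[OF \<sigma>] by blast
  next
    fix E assume "E \<in> {flow_energy X w f |f. unit_flow X w \<sigma> M f}"
    then show "1 / ?D \<le> E" using energy[OF \<sigma>] D_pos by (auto simp: field_simps)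
  qed
  show "1 / ?D \<le> eff_res_set X w S M"
    unfolding eff_res_set_def using point_mass by (intro cInf_greatest) (auto intro: eff_res)
qed

lemma inverse_commute_C_le_dirichlet:
  assumes "connected_wgraph X w" and "M \<subseteq> X" "M \<noteq> {}" and "S \<subseteq> X - M" "S \<noteq> {}"
    and "\<And>u. u \<in> S \<Longrightarrow> g u = 1" and "\<And>u. u \<in> M \<Longrightarrow> g u = 0"
  shows "1 / commute_C X w S M \<le> dirichlet_form X w g / wtotal X w"
proof -
  let ?D = "dirichlet_form X w g"
  have D_pos: "0 < ?D" and D: "1 / ?D \<le> eff_res_set X w S M"
    using eff_res_set_ge_inverse_dirichlet[OF assms(1-5), of g] assms(6,7) by blast+
  have le: "wtotal X w / ?D \<le> commute_C X w S M"
    unfolding commute_C_def using mult_left_mono[OF D less_imp_le[OF wtotal_pos]] by simp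
  moreover have "0 < commute_C X w S M"
    using le D_pos wtotal_pos by (smt (verit) divide_pos_pos)
  ultimately show ?thesis
    using D_pos wtotal_pos by (simp add: field_simps)
qed

lemma walk_prob_hit_then_return_ge:
  assumes "S \<subseteq> X" and \<mu>_nonneg: "\<And>u. u \<in> X \<Longrightarrow> 0 \<le> \<mu> u" and \<mu>_sum: "(\<Sum>s\<in>S. \<mu> s) = 1"
  shows "1 - (\<Sum>s\<in>S. \<mu> s * escape_prob S n s) - (\<Sum>s\<in>S. \<mu> s * return_prob S M n s)
    \<le> walk_prob X w \<mu> (Suc n) (hit_then_return M S (Suc n))"
proof -
  let ?H = "\<lambda>s. path_prob X w s n (\<lambda>vs. hit_then_return M S (Suc n) (s # vs))"
  have each: "1 - escape_prob S n s - return_prob S M n s \<le> ?H s" if "s \<in> X" for s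
  proof -
    let ?P = "path_prob X w s n"
    let ?esc = "\<lambda>vs. \<forall>x\<in>set vs. x \<notin> S"
    have "1 \<le> ?P (\<lambda>vs. hit_then_return M S (Suc n) (s # vs) \<or> ?esc vs \<or> visits_before S M vs)"
      using path_prob_True[OF that, of n] path_prob_mono[OF that, of n "\<lambda>_. True"]
        hit_then_return_cases[of _ n M S s] by (simp add: paths_def)
    also have "\<dots> \<le> ?H s + ?P (\<lambda>vs. ?esc vs \<or> visits_before S M vs)"
      by (rule path_prob_disj_le[OF that])
    also have "?P (\<lambda>vs. ?esc vs \<or> visits_before S M vs) \<le> escape_prob S n s + return_prob S M n s"
      unfolding escape_prob_def return_prob_def by (rule path_prob_disj_le[OF that])
    finally show ?thesis by simp
  qed
  have "1 - (\<Sum>s\<in>S. \<mu> s * escape_prob S n s) - (\<Sum>s\<in>S. \<mu> s * return_prob S M n s)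
      = (\<Sum>s\<in>S. \<mu> s * (1 - escape_prob S n s - return_prob S M n s))"
    using \<mu>_sum by (simp add: right_diff_distrib sum_subtractf)
  also have "\<dots> \<le> (\<Sum>s\<in>S. \<mu> s * ?H s)"
    using assms(1) by (intro sum_mono mult_left_mono each \<mu>_nonneg) auto
  also have "\<dots> \<le> (\<Sum>u\<in>X. \<mu> u * ?H u)"
    using assms(1) by (intro sum_mono2 finite_vertices) (auto intro: mult_nonneg_nonneg \<mu>_nonneg path_prob_nonneg)
  also have "\<dots> = walk_prob X w \<mu> (Suc n) (hit_then_return M S (Suc n))"
    by (rule walk_prob_Suc[OF finite_vertices, symmetric])
  finally show ?thesis .
qed

lemma stat_meas_pos: "S \<subseteq> X \<Longrightarrow> S \<noteq> {} \<Longrightarrow> 0 < stat_meas X w S"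
  unfolding stat_meas_def using finite_vertices
  by (intro sum_pos) (auto intro: finite_subset stat_dist_pos)

lemma stat_restr_sum_mult: "(\<Sum>s\<in>S. stat_restr X w S s * f s) = (\<Sum>s\<in>S. \<pi> s * f s) / stat_meas X w S"
  by (simp add: stat_restr_def sum_divide_distrib)

lemma stat_restr_nonneg: "u \<in> X \<Longrightarrow> S \<subseteq> X \<Longrightarrow> S \<noteq> {} \<Longrightarrow> 0 \<le> stat_restr X w S u"
  using stat_dist_pos stat_meas_pos by (simp add: stat_restr_def less_imp_le)

lemma sum_stat_restr: "S \<subseteq> X \<Longrightarrow> S \<noteq> {} \<Longrightarrow> (\<Sum>s\<in>S. stat_restr X w S s) = 1"
  using stat_restr_sum_mult[of S "\<lambda>_. 1"] stat_meas_pos[of S] by (simp add: stat_meas_def)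

lemma stat_restr_escape_bound:
  assumes "S \<subseteq> X" "S \<noteq> {}"
  shows "(\<Sum>s\<in>S. stat_restr X w S s * escape_prob S n s) \<le> 1 / (real (Suc n) * stat_meas X w S)"
proof -
  have "(\<Sum>s\<in>S. \<pi> s * escape_prob S n s) \<le> 1 / real (Suc n)"
    using stationary_escape_bound[OF assms(1), of n] by (simp add: pos_le_divide_eq mult.commute)
  then have "(\<Sum>s\<in>S. \<pi> s * escape_prob S n s) / stat_meas X w S \<le> 1 / real (Suc n) / stat_meas X w S"
    using stat_meas_pos[OF assms] by (rule divide_right_mono[OF _ less_imp_le])
  then show ?thesis
    by (simp add: stat_restr_sum_mult)
qed

lemma stat_restr_return_bound:
  assumes "connected_wgraph X w" and "M \<subseteq> X" "M \<noteq> {}" and "S \<subseteq> X - M" "S \<noteq> {}"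
  shows "1 / commute_C X w S M \<le> stat_meas X w S * (1 - (\<Sum>s\<in>S. stat_restr X w S s * return_prob S M n s))"
proof -
  have S: "S \<subseteq> X" using assms(4) by auto
  have "1 / commute_C X w S M \<le> dirichlet_form X w (return_potential S M n) / wtotal X w"
    using assms by (intro inverse_commute_C_le_dirichlet) (auto simp: return_potential_def)
  also have "\<dots> \<le> (\<Sum>s\<in>S. wdeg X w s * (1 - return_prob S M n s)) / wtotal X w"
    using dirichlet_form_return_potential_le[OF assms(4)] wtotal_pos by (simp add: divide_right_mono)
  also have "\<dots> = (\<Sum>s\<in>S. \<pi> s * (1 - return_prob S M n s))"
    by (simp add: stat_dist_def sum_divide_distrib)
  also have "\<dots> = stat_meas X w S * (1 - (\<Sum>s\<in>S. stat_restr X w S s * return_prob S M n s))"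
    using stat_meas_pos[OF S assms(5)]
    by (simp add: stat_restr_sum_mult right_diff_distrib sum_subtractf stat_meas_def)
  finally show ?thesis .
qed

end

lemma random_walk_graph_if_connected:
  assumes "weighted_graph X w" and "connected_wgraph X w" and "a \<in> X" "b \<in> X" "a \<noteq> b"
  shows "random_walk_graph X w"
proof
  show "finite X" "X \<noteq> {}" and "\<And>u v. u \<in> X \<Longrightarrow> v \<in> X \<Longrightarrow> w u v = w v u"
    and nonneg: "\<And>u v. u \<in> X \<Longrightarrow> v \<in> X \<Longrightarrow> 0 \<le> w u v"
    using assms(1,3) unfolding weighted_graph_def by auto
  fix u assume u: "u \<in> X"
  have "\<exists>t\<in>X. t \<noteq> u"
    using assms(3-5) by (cases "u = a") auto
  then obtain t where "t \<in> X" "t \<noteq> u" by blast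
  then have "(u, t) \<in> {(a, b). a \<in> X \<and> b \<in> X \<and> 0 < w a b}\<^sup>*"
    using assms(2) u unfolding connected_wgraph_def by blast
  then obtain v where "(u, v) \<in> {(a, b). a \<in> X \<and> b \<in> X \<and> 0 < w a b}"
    using \<open>t \<noteq> u\<close> by (cases rule: converse_rtranclE) auto
  then have "v \<in> X" "0 < w u v" by auto
  moreover have "w u v \<le> wdeg X w u"
    unfolding wdeg_def using \<open>finite X\<close> \<open>v \<in> X\<close> u nonneg by (intro member_le_sum) auto
  ultimately show "0 < wdeg X w u" by simp
qed

theorem mainTheorem4:
  fixes X :: "'a set" and w :: "'a \<Rightarrow> 'a \<Rightarrow> real"
    and M S :: "'a set" and p :: real and T :: nat
  assumes "weighted_graph X w"
    and "connected_wgraph X w"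
    and "M \<subseteq> X" and "M \<noteq> {}"
    and "S \<subseteq> X - M" and "S \<noteq> {}"
    and "T > 0"
    and "2 / real T \<le> stat_meas X w S * p"
    and "stat_meas X w S * p \<le> 1 / commute_C X w S M"
  shows "walk_prob X w (stat_restr X w S) T (hit_then_return M S T) \<ge> p / 2"
proof -
  obtain n where T: "T = Suc n" using \<open>T > 0\<close> gr0_implies_Suc by blast
  obtain m s where "m \<in> M" "s \<in> S" using assms(4,6) by blast
  with assms(3,5) interpret random_walk_graph X w
    by (intro random_walk_graph_if_connected[OF assms(1,2), of m s]) auto
  let ?\<mu> = "stat_restr X w S" and ?\<pi>S = "stat_meas X w S"
  have S: "S \<subseteq> X" using assms(5) by auto
  have "0 < ?\<pi>S" using stat_meas_pos[OF S assms(6)] .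
  have "1 / (real T * ?\<pi>S) \<le> p / 2"
    using assms(7,8) \<open>0 < ?\<pi>S\<close> by (simp add: field_simps)
  then have escape: "(\<Sum>s\<in>S. ?\<mu> s * escape_prob S n s) \<le> p / 2"
    using stat_restr_escape_bound[OF S assms(6), of n] unfolding T by linarith
  have "?\<pi>S * p \<le> ?\<pi>S * (1 - (\<Sum>s\<in>S. ?\<mu> s * return_prob S M n s))"
    using stat_restr_return_bound[OF assms(2-6), of n] assms(9) by linarith
  then have return: "(\<Sum>s\<in>S. ?\<mu> s * return_prob S M n s) \<le> 1 - p"
    using \<open>0 < ?\<pi>S\<close> by simp
  have "1 - (\<Sum>s\<in>S. ?\<mu> s * escape_prob S n s) - (\<Sum>s\<in>S. ?\<mu> s * return_prob S M n s)
      \<le> walk_prob X w ?\<mu> T (hit_then_return M S T)"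
    unfolding T using S assms(6)
    by (intro walk_prob_hit_then_return_ge stat_restr_nonneg sum_stat_restr)
  then show ?thesis
    using escape return by linarith
qed

end
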